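(* In the $T$-period model described in the context, with short sales prohibitions (admissible strategies are predictable self-financing with $h_m(t)\ge 0$ for $m\ge 1$), suppose there exists a strong risk neutral nonlinear expectation: a nonempty family $\mathcal{Q}$ of probability measures on $\Omega$ with $\sup_{Q\in\mathcal{Q}}Q(\omega)>0$ for all $\omega\in\Omega$ such that for every $Q\in\mathcal{Q}$, all $0\le t\le u\le T$ and all $m=1,\dots,M$, $E_Q[S_m^*(u)\mid\mathcal{F}_t]\le S_m^*(t)$ holds $Q$-almost surely (i.e. $\sup_{Q\in\mathcal{Q}}E_Q[S_m^*(u)\mid\mathcal{F}_t]\le S_m^*(t)$). Then there is no multi-period arbitrage under model uncertainty.
   Context: Multi-period model: $\Omega=\{\omega_1,\dots,\omega_K\}$ is finite with a filtration $\mathcal{F}_0\subseteq\cdots\subseteq\mathcal{F}_T$, $\mathcal{F}_0$ trivial and $\mathcal{F}_T=2^\Omega$. $\mathcal{P}$ is a nonempty family of probability measures on $\Omega$ with $\sup_{P\in\mathcal{P}}P(\omega)>0$ for all $\omega$. Bond: $S_0(0)=1$, $S_0(t)=(1+r_1)\cdots(1+r_t)$, each $r_t\ge 0$ $\mathcal{F}_{t-1}$-measurable. Risky securities $S_m(t)$ are $\mathcal{F}_t$-measurable with $S_m(0)>0$. Discounted prices $S_m^*(t)=S_m(t)/S_0(t)$, $\Delta S_m^*(t)=S_m^*(t)-S_m^*(t-1)$. A trading strategy $H=(h(t))_{t=1}^T$, $h(t)=(h_0(t),\dots,h_M(t))$ $\mathcal{F}_{t-1}$-measurable; $V^*(0)=h_0(1)+\sum_m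 h_m(1)S_m^*(0)$, $V^*(t)=h_0(t)+\sum_m h_m(t)S_m^*(t)$. $H$ is self-financing if $[h_0(t+1)-h_0(t)]+\sum_m[h_m(t+1)-h_m(t)]S_m^*(t)=0$ for $t=1,\dots,T-1$. An admissible self-financing $H$ is a multi-period arbitrage under model uncertainty if $V^*(0)=0$, $V^*(T)\ge 0$ on $\Omega$, and $\sup_{P\in\mathcal{P}}E_P[V^*(T)]>0$. *)

theory Defs
  imports Complex_Main
begin

text \<open>Finite sample space: the finite type 'w, Omega = UNIV.
  A probability measure is given by its point masses.\<close>

definition is_prob :: "('w::finite \<Rightarrow> real) \<Rightarrow> bool" where
  "is_prob P \<longleftrightarrow> (\<forall>w. 0 \<le> P w) \<and> (\<Sum>w\<in>UNIV. P w) = 1"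

definition expect :: "('w::finite \<Rightarrow> real) \<Rightarrow> ('w \<Rightarrow> real) \<Rightarrow> real" where
  "expect P X = (\<Sum>w\<in>UNIV. P w * X w)"

definition is_algebra :: "'w set set \<Rightarrow> bool" where
  "is_algebra F \<longleftrightarrow> UNIV \<in> F \<and> (\<forall>A\<in>F. - A \<in> F) \<and> (\<forall>A\<in>F. \<forall>B\<in>F. A \<union> B \<in> F)"

definition fmeas :: "'w set set \<Rightarrow> ('w \<Rightarrow> real) \<Rightarrow> bool" where
  "fmeas F f \<longleftrightarrow> (\<forall>c. {w. f w = c} \<in> F)"

definition filtration :: "nat \<Rightarrow> (nat \<Rightarrow> 'w set set) \<Rightarrow> bool" where
  "filtration T F \<longleftrightarrow> (\<forall>t\<le>T. is_algebra (F t)) \<and> F 0 = {{}, UNIV}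
     \<and> (\<forall>t<T. F t \<subseteq> F (Suc t)) \<and> F T = Pow UNIV"

text \<open>Atom of F containing w, and the elementary conditional expectation
  E_Q[X | F](w) (well-defined whenever Q(atom) > 0, in particular Q-a.s.).\<close>
definition atom :: "'w set set \<Rightarrow> 'w \<Rightarrow> 'w set" where
  "atom F w = \<Inter>{A\<in>F. w \<in> A}"

definition cond_exp :: "('w::finite \<Rightarrow> real) \<Rightarrow> 'w set set \<Rightarrow> ('w \<Rightarrow> real) \<Rightarrow> 'w \<Rightarrow> real" where
  "cond_exp Q F X w = (\<Sum>v\<in>atom F w. Q v * X v) / (\<Sum>v\<in>atom F w. Q v)"

definition bond :: "(nat \<Rightarrow> 'w \<Rightarrow> real) \<Rightarrow> nat \<Rightarrow> 'w \<Rightarrow> real" where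
  "bond r t w = (\<Prod>s\<in>{1..t}. 1 + r s w)"

definition disc :: "(nat \<Rightarrow> nat \<Rightarrow> 'w \<Rightarrow> real) \<Rightarrow> (nat \<Rightarrow> 'w \<Rightarrow> real) \<Rightarrow> nat \<Rightarrow> nat \<Rightarrow> 'w \<Rightarrow> real" where
  "disc S r m t w = S m t w / bond r t w"

text \<open>Strategy h t m w: holding of security m (m=0 bond) over period t (t=1..T).\<close>
definition value0 :: "nat \<Rightarrow> (nat \<Rightarrow> nat \<Rightarrow> 'w \<Rightarrow> real) \<Rightarrow> (nat \<Rightarrow> 'w \<Rightarrow> real)
    \<Rightarrow> (nat \<Rightarrow> nat \<Rightarrow> 'w \<Rightarrow> real) \<Rightarrow> 'w \<Rightarrow> real" where
  "value0 M S r h w = h 1 0 w + (\<Sum>m=1..M. h 1 m w * disc S r m 0 w)"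

definition valuet :: "nat \<Rightarrow> (nat \<Rightarrow> nat \<Rightarrow> 'w \<Rightarrow> real) \<Rightarrow> (nat \<Rightarrow> 'w \<Rightarrow> real)
    \<Rightarrow> (nat \<Rightarrow> nat \<Rightarrow> 'w \<Rightarrow> real) \<Rightarrow> nat \<Rightarrow> 'w \<Rightarrow> real" where
  "valuet M S r h t w = h t 0 w + (\<Sum>m=1..M. h t m w * disc S r m t w)"

definition predictable :: "nat \<Rightarrow> nat \<Rightarrow> (nat \<Rightarrow> 'w set set) \<Rightarrow> (nat \<Rightarrow> nat \<Rightarrow> 'w \<Rightarrow> real) \<Rightarrow> bool" where
  "predictable T M F h \<longleftrightarrow> (\<forall>t\<in>{1..T}. \<forall>m\<le>M. fmeas (F (t - 1)) (h t m))"

definition self_financing :: "nat \<Rightarrow> nat \<Rightarrow> (nat \<Rightarrow> nat \<Rightarrow> 'w \<Rightarrow> real) \<Rightarrow> (nat \<Rightarrow> 'w \<Rightarrow> real)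
    \<Rightarrow> (nat \<Rightarrow> nat \<Rightarrow> 'w \<Rightarrow> real) \<Rightarrow> bool" where
  "self_financing T M S r h \<longleftrightarrow> (\<forall>t\<in>{1..<T}. \<forall>w.
     (h (Suc t) 0 w - h t 0 w) + (\<Sum>m=1..M. (h (Suc t) m w - h t m w) * disc S r m t w) = 0)"

definition admissible_nss :: "nat \<Rightarrow> nat \<Rightarrow> (nat \<Rightarrow> 'w set set) \<Rightarrow> (nat \<Rightarrow> nat \<Rightarrow> 'w \<Rightarrow> real)
    \<Rightarrow> (nat \<Rightarrow> 'w \<Rightarrow> real) \<Rightarrow> (nat \<Rightarrow> nat \<Rightarrow> 'w \<Rightarrow> real) \<Rightarrow> bool" where
  "admissible_nss T M F S r h \<longleftrightarrow> predictable T M F h \<and> self_financing T M S r h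
     \<and> (\<forall>t\<in>{1..T}. \<forall>m\<in>{1..M}. \<forall>w. 0 \<le> h t m w)"

definition mp_arbitrage_mu :: "nat \<Rightarrow> nat \<Rightarrow> ('w::finite \<Rightarrow> real) set \<Rightarrow> (nat \<Rightarrow> 'w set set)
    \<Rightarrow> (nat \<Rightarrow> nat \<Rightarrow> 'w \<Rightarrow> real) \<Rightarrow> (nat \<Rightarrow> 'w \<Rightarrow> real) \<Rightarrow> (nat \<Rightarrow> nat \<Rightarrow> 'w \<Rightarrow> real) \<Rightarrow> bool" where
  "mp_arbitrage_mu T M \<P> F S r h \<longleftrightarrow> admissible_nss T M F S r h
     \<and> (\<forall>w. value0 M S r h w = 0)
     \<and> (\<forall>w. 0 \<le> valuet M S r h T w)
     \<and> (SUP P\<in>\<P>. expect P (valuet M S r h T)) > 0"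

definition strong_rn :: "nat \<Rightarrow> nat \<Rightarrow> ('w::finite \<Rightarrow> real) set \<Rightarrow> (nat \<Rightarrow> 'w set set)
    \<Rightarrow> (nat \<Rightarrow> nat \<Rightarrow> 'w \<Rightarrow> real) \<Rightarrow> (nat \<Rightarrow> 'w \<Rightarrow> real) \<Rightarrow> bool" where
  "strong_rn T M \<Q> F S r \<longleftrightarrow> \<Q> \<noteq> {} \<and> (\<forall>Q\<in>\<Q>. is_prob Q) \<and> (\<forall>w. (SUP Q\<in>\<Q>. Q w) > 0)
     \<and> (\<forall>Q\<in>\<Q>. \<forall>t u m w. t \<le> u \<and> u \<le> T \<and> m \<in> {1..M} \<and> Q w > 0 \<longrightarrow>
          cond_exp Q (F t) (disc S r m u) w \<le> disc S r m t w)"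

end

theory Submission
  imports Defs
begin

text \<open>A self-financing strategy with zero initial value has terminal value
  equal to the sum of its gains h(s) (S*(s) - S*(s-1)); since the holdings are predictable
  and nonnegative (no short sales), the tower property gives each gain a nonpositive
  Q-expectation. A nonnegative terminal value with nonpositive Q-expectation vanishes
  wherever Q charges, and the Q in the family jointly charge every state, so the terminal
  value is zero and no P has positive expected gain.\<close>

lemma atom_self: "w \<in> atom F w"
  by (auto simp: atom_def)

lemma mem_atom_iff_atom_eq:
  assumes "\<forall>A\<in>F. - A \<in> F"
  shows "v \<in> atom F w \<longleftrightarrow> atom F v = atom F w"
proof
  assume v: "v \<in> atom F w"
  have "v \<in> A \<longleftrightarrow> w \<in> A" if "A \<in> F" for A
    using v that assms by (auto simp: atom_def)
  then show "atom F v = atom F w"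
    unfolding atom_def by blast
next
  assume "atom F v = atom F w"
  then show "v \<in> atom F w"
    using atom_self by metis
qed

lemma fmeas_const_on_atom:
  assumes "fmeas F h" and "v \<in> atom F w"
  shows "h v = h w"
proof -
  have "{u. h u = h w} \<in> F" using assms(1) by (simp add: fmeas_def)
  then show ?thesis using assms(2) by (auto simp: atom_def)
qed

lemma cond_exp_mult_measurable:
  assumes "fmeas F h"
  shows "cond_exp Q F (\<lambda>v. h v * Y v) w = h w * cond_exp Q F Y w"
proof -
  have "(\<Sum>v\<in>atom F w. Q v * (h v * Y v)) = h w * (\<Sum>v\<in>atom F w. Q v * Y v)"
    by (simp add: sum_distrib_left fmeas_const_on_atom[OF assms] mult.left_commute)
  then show ?thesis by (simp add: cond_exp_def)
qed

lemma expect_cond_exp: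
  fixes Q :: "'w::finite \<Rightarrow> real"
  assumes Q: "\<forall>w. 0 \<le> Q w" and F: "\<forall>A\<in>F. - A \<in> F"
  shows "expect Q (cond_exp Q F g) = expect Q g"
proof -
  define qa where "qa w = (\<Sum>u\<in>atom F w. Q u)" for w
  have atom_mass: "(\<Sum>w\<in>UNIV. if v \<in> atom F w then Q w / qa w * (Q v * g v) else 0)
      = Q v * g v" for v
  proof -
    have "(\<Sum>w\<in>UNIV. if v \<in> atom F w then Q w / qa w * (Q v * g v) else 0)
        = (\<Sum>w\<in>UNIV. if w \<in> atom F v then Q w / qa v * (Q v * g v) else 0)"
      using mem_atom_iff_atom_eq[OF F] by (intro sum.cong) (auto simp: qa_def)
    also have "\<dots> = qa v / qa v * (Q v * g v)"
      by (simp add: sum.If_cases qa_def sum_divide_distrib[symmetric] sum_distrib_right[symmetric])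
    also have "\<dots> = Q v * g v"
    proof (cases "qa v = 0")
      case True
      have "Q v \<le> qa v"
        unfolding qa_def by (rule member_le_sum) (use Q atom_self in auto)
      with True Q have "Q v = 0" by (metis order_antisym)
      with True show ?thesis by simp
    qed simp
    finally show ?thesis .
  qed
  have "expect Q (cond_exp Q F g)
      = (\<Sum>w\<in>UNIV. \<Sum>v\<in>UNIV. if v \<in> atom F w then Q w / qa w * (Q v * g v) else 0)"
    by (simp add: expect_def cond_exp_def qa_def sum_distrib_left sum_divide_distrib sum.If_cases)
  also have "\<dots> = (\<Sum>v\<in>UNIV. \<Sum>w\<in>UNIV. if v \<in> atom F w then Q w / qa w * (Q v * g v) else 0)"
    by (rule sum.swap)
  also have "\<dots> = expect Q g"
    by (simp add: atom_mass expect_def)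
  finally show ?thesis .
qed

lemma expect_nonneg_measurable_mult_increment_nonpos:
  fixes Q :: "'w::finite \<Rightarrow> real"
  assumes Q: "\<forall>w. 0 \<le> Q w" and F: "\<forall>A\<in>F. - A \<in> F"
    and h: "fmeas F h" "\<forall>w. 0 \<le> h w"
    and super: "\<forall>w. Q w > 0 \<longrightarrow> cond_exp Q F Y w \<le> Z w"
  shows "expect Q (\<lambda>w. h w * (Y w - Z w)) \<le> 0"
proof -
  have "cond_exp Q F (\<lambda>w. h w * Y w) = (\<lambda>w. h w * cond_exp Q F Y w)"
    using cond_exp_mult_measurable[OF h(1)] by blast
  then have "expect Q (\<lambda>w. h w * Y w) = expect Q (\<lambda>w. h w * cond_exp Q F Y w)"
    using expect_cond_exp[OF Q F, of "\<lambda>w. h w * Y w"] by simp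
  also have "\<dots> \<le> expect Q (\<lambda>w. h w * Z w)"
    unfolding expect_def
  proof (rule sum_mono)
    fix w
    show "Q w * (h w * cond_exp Q F Y w) \<le> Q w * (h w * Z w)"
    proof (cases "Q w > 0")
      case True
      then show ?thesis using super h(2) by (simp add: mult_left_mono)
    next
      case False
      with Q have "Q w = 0" by (metis order_less_le)
      then show ?thesis by simp
    qed
  qed
  finally show ?thesis
    by (simp add: expect_def algebra_simps sum_subtractf)
qed

lemma valuet_eq_value0_plus_gains:
  assumes sf: "self_financing T M S r h" and "1 \<le> t" "t \<le> T"
  shows "valuet M S r h t w = value0 M S r h w +
     (\<Sum>s=1..t. \<Sum>m=1..M. h s m w * (disc S r m s w - disc S r m (s - 1) w))"
  using assms(2,3)
proof (induction t rule: nat_induct_at_least)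
  case base
  then show ?case
    by (simp add: valuet_def value0_def sum_subtractf right_diff_distrib)
next
  case (Suc t)
  have "(h (Suc t) 0 w - h t 0 w)
      + (\<Sum>m=1..M. (h (Suc t) m w - h t m w) * disc S r m t w) = 0"
    using sf Suc.hyps Suc.prems by (simp add: self_financing_def)
  then have "valuet M S r h (Suc t) w - valuet M S r h t w
      = (\<Sum>m=1..M. h (Suc t) m w * (disc S r m (Suc t) w - disc S r m t w))"
    by (simp add: valuet_def sum_subtractf algebra_simps)
  then show ?case
    using Suc by simp
qed

lemma expect_terminal_value_nonpos:
  assumes "1 \<le> T" and "filtration T F" and "strong_rn T M \<Q> F S r" and "Q \<in> \<Q>"
    and "admissible_nss T M F S r h" and "\<forall>w. value0 M S r h w = 0"
  shows "expect Q (valuet M S r h T) \<le> 0"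
proof -
  have Q: "\<forall>w. 0 \<le> Q w"
    using assms(3,4) by (auto simp: strong_rn_def is_prob_def)
  have gain_nonpos:
    "expect Q (\<lambda>w. h s m w * (disc S r m s w - disc S r m (s - 1) w)) \<le> 0"
    if s: "s \<in> {1..T}" and m: "m \<in> {1..M}" for s m
  proof (rule expect_nonneg_measurable_mult_increment_nonpos[OF Q])
    show "\<forall>A\<in>F (s - 1). - A \<in> F (s - 1)"
      using assms(2) s by (auto simp: filtration_def is_algebra_def)
    show "fmeas (F (s - 1)) (h s m)" "\<forall>w. 0 \<le> h s m w"
      using assms(5) s m by (auto simp: admissible_nss_def predictable_def)
    show "\<forall>w. Q w > 0 \<longrightarrow> cond_exp Q (F (s - 1)) (disc S r m s) w \<le> disc S r m (s - 1) w"
      using assms(3,4) s m unfolding strong_rn_def by auto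
  qed
  have "self_financing T M S r h"
    using assms(5) by (simp add: admissible_nss_def)
  then have "expect Q (valuet M S r h T)
      = (\<Sum>s=1..T. \<Sum>m=1..M. expect Q (\<lambda>w. h s m w * (disc S r m s w - disc S r m (s - 1) w)))"
    using assms(1,6)
    by (simp add: valuet_eq_value0_plus_gains expect_def sum_distrib_left sum.swap[of _ UNIV])
  also have "\<dots> \<le> 0"
    using gain_nonpos by (intro sum_nonpos) auto
  finally show ?thesis .
qed

lemma nonneg_expect_nonpos_imp_zero:
  fixes Q :: "'w::finite \<Rightarrow> real"
  assumes "\<forall>w. 0 \<le> Q w" "\<forall>w. 0 \<le> V w" "expect Q V \<le> 0" "Q w > 0"
  shows "V w = 0"
proof -
  have "\<forall>v\<in>UNIV. 0 \<le> Q v * V v" using assms(1,2) by simp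
  moreover from this have "(\<Sum>v\<in>UNIV. Q v * V v) = 0"
    using assms(3) by (simp add: expect_def order_antisym sum_nonneg)
  ultimately have "Q w * V w = 0" by (simp add: sum_nonneg_eq_0_iff)
  then show ?thesis using assms(4) by simp
qed

lemma SUP_pos_imp_ex_pos:
  fixes f :: "'a \<Rightarrow> real"
  assumes "A \<noteq> {}" "(SUP x\<in>A. f x) > 0"
  shows "\<exists>x\<in>A. f x > 0"
  using assms cSUP_least[of A f 0] by force

theorem mainTheorem8:
  fixes T M :: nat
    and F :: "nat \<Rightarrow> ('w::finite) set set"
    and \<P> :: "('w \<Rightarrow> real) set"
    and r :: "nat \<Rightarrow> 'w \<Rightarrow> real"
    and S :: "nat \<Rightarrow> nat \<Rightarrow> 'w \<Rightarrow> real"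
  assumes "1 \<le> T"
    and "filtration T F"
    and "\<P> \<noteq> {}" and "\<forall>P\<in>\<P>. is_prob P" and "\<forall>w. (SUP P\<in>\<P>. P w) > 0"
    and "\<forall>t\<in>{1..T}. \<forall>w. 0 \<le> r t w"
    and "\<forall>t\<in>{1..T}. fmeas (F (t - 1)) (r t)"
    and "\<forall>m\<in>{1..M}. \<forall>t\<le>T. fmeas (F t) (S m t)"
    and "\<forall>m\<in>{1..M}. \<forall>w. 0 < S m 0 w"
    and "\<exists>\<Q>. strong_rn T M \<Q> F S r"
  shows "\<not> (\<exists>h. mp_arbitrage_mu T M \<P> F S r h)"
proof
  assume "\<exists>h. mp_arbitrage_mu T M \<P> F S r h"
  then obtain h where arb: "mp_arbitrage_mu T M \<P> F S r h" ..
  obtain \<Q> where rn: "strong_rn T M \<Q> F S r" using assms(10) ..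
  define V where "V = valuet M S r h T"
  have V_zero: "V w = 0" for w
  proof -
    obtain Q where Q: "Q \<in> \<Q>" "Q w > 0"
      using rn SUP_pos_imp_ex_pos[of \<Q> "\<lambda>Q. Q w"] by (auto simp: strong_rn_def)
    show ?thesis
    proof (rule nonneg_expect_nonpos_imp_zero)
      show "\<forall>w. 0 \<le> Q w" using rn Q by (auto simp: strong_rn_def is_prob_def)
      show "\<forall>w. 0 \<le> V w" using arb by (simp add: mp_arbitrage_mu_def V_def)
      show "expect Q V \<le> 0"
        using expect_terminal_value_nonpos[OF assms(1,2) rn Q(1)] arb
        by (simp add: mp_arbitrage_mu_def V_def)
    qed (fact Q(2))
  qed
  have "(SUP P\<in>\<P>. expect P V) = 0"
    using assms(3) by (simp add: expect_def V_zero)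
  with arb show False
    by (simp add: mp_arbitrage_mu_def V_def)
qed

end
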